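(* Let $(\mathbb{F}(t),\sigma)$ be a $\Pi\Sigma$-extension of a difference field $(\mathbb{F},\sigma)$, and let $A=A_\ell\sigma^\ell+\dots+A_1\sigma+A_0\in\mathbb{F}(t)[\sigma]^{n\times n}$ with $A_0,\dots,A_\ell\in\mathbb{F}(t)^{n\times n}$ and $\det A_\ell\ne0$. Then there exist $\tilde\ell\in\mathbb{N}$ and a unimodular $V\in\mathrm{GL}_n(\mathbb{F}(t)[\sigma,\sigma^{-1}])$ such that $VA=\sum_{i=0}^{\tilde\ell}B_i\sigma^i\in\mathbb{F}(t)[\sigma]^{n\times n}$ with $\det B_0\ne0$. Consequently every head regular system $A(y)=b$ is fully regular.
   Context: A difference field $(\mathbb{F},\sigma)$ is a field (containing $\mathbb{Q}$) with an automorphism $\sigma$; in a $\Pi\Sigma$-extension $(\mathbb{F}(t),\sigma)$, $\sigma$ extends to the rational function field with $\sigma(t)=t+\beta$ or $\sigma(t)=\alpha t$ ($\alpha,\beta\in\mathbb{F}\setminus\{0\}$) and no new constants. $\mathbb{F}(t)[\sigma]$ is the Ore polynomial ring of polynomials $\sum a_i\sigma^i$ ($a_i\in\mathbb{F}(t)$) with multiplication determined by $\sigma a=\sigma(a)\sigma$; $\mathbb{F}(t)[\sigma,\sigma^{-1}]$ is its localisation at powers of $\sigma$. Unimodular means having a two-sided inverse over the same ring. A square system $A(y)=b$, $A=\sum_{i=0}^\ell A_i\sigma^i$, is head regular if $\det A_\ell\ne0$, and fully regular if it is head regular and there is a unimodular $V$ over $\mathbb{F}(t)[\sigma,\sigma^{-1}]$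 with $VA\in\mathbb{F}(t)[\sigma]^{n\times n}$ whose coefficient of $\sigma^0$ has nonzero determinant. *)

theory Defs
  imports "HOL-Analysis.Determinants" "HOL-Computational_Algebra.Polynomial"
          "HOL-Computational_Algebra.Fraction_Field"
begin

definition field_aut :: "('a::field \<Rightarrow> 'a) \<Rightarrow> bool" where
  "field_aut f \<longleftrightarrow> bij f \<and> f 1 = 1 \<and> (\<forall>x y. f (x + y) = f x + f y) \<and> (\<forall>x y. f (x * y) = f x * f y)"

type_synonym 'a ratfun = "'a poly fract"

definition rconst :: "'a::field \<Rightarrow> 'a ratfun" where
  "rconst c = Fract [:c:] 1"

definition tvar :: "'a::field ratfun" where
  "tvar = Fract [:0, 1:] 1"

definition PiSigma_ext :: "('a::field_char_0 \<Rightarrow> 'a) \<Rightarrow> ('a ratfun \<Rightarrow> 'a ratfun) \<Rightarrow> bool" where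
  "PiSigma_ext sF s \<longleftrightarrow>
     field_aut sF \<and> field_aut s \<and> (\<forall>c. s (rconst c) = rconst (sF c)) \<and>
     ((\<exists>\<beta>. \<beta> \<noteq> 0 \<and> s tvar = tvar + rconst \<beta>) \<or> (\<exists>\<alpha>. \<alpha> \<noteq> 0 \<and> s tvar = rconst \<alpha> * tvar)) \<and>
     {x. s x = x} = rconst ` {c. sF c = c}"

definition zpow :: "('a \<Rightarrow> 'a) \<Rightarrow> int \<Rightarrow> 'a \<Rightarrow> 'a" where
  "zpow s k = (if k \<ge> 0 then s ^^ nat k else inv s ^^ nat (- k))"

definition map_matrix :: "('a \<Rightarrow> 'a) \<Rightarrow> 'a ^'n ^'m \<Rightarrow> 'a ^'n ^'m" where
  "map_matrix f M = (\<chi> i j. f (M $ i $ j))"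

text \<open>An n x n matrix over K[sigma, sigma^-1] is represented by its coefficient sequence
  k \<mapsto> M_k in K^(n x n) (so M = sum_k M_k sigma^k), with finite support.\<close>
type_synonym ('k, 'n) lmat = "int \<Rightarrow> 'k ^'n ^'n"

definition lfin :: "('k::zero, 'n::finite) lmat \<Rightarrow> bool" where
  "lfin M \<longleftrightarrow> finite {k. M k \<noteq> 0}"

definition ore_mat :: "('k::zero, 'n::finite) lmat \<Rightarrow> bool" where
  "ore_mat M \<longleftrightarrow> lfin M \<and> (\<forall>k<0. M k = 0)"

text \<open>Product, using sigma a = sigma(a) sigma:
  (sum_i V_i sigma^i)(sum_j W_j sigma^j) = sum_k (sum_i V_i sigma^i(W_(k-i))) sigma^k.\<close>
definition lmult :: "('k::field \<Rightarrow> 'k) \<Rightarrow> ('k, 'n::finite) lmat \<Rightarrow> ('k, 'n) lmat \<Rightarrow> ('k, 'n) lmat" where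
  "lmult s V W = (\<lambda>k. \<Sum>i\<in>{i. V i \<noteq> 0}. V i ** map_matrix (zpow s i) (W (k - i)))"

definition lone :: "('k::field, 'n::finite) lmat" where
  "lone = (\<lambda>k. if k = 0 then mat 1 else 0)"

definition unimodular_laurent :: "('k::field \<Rightarrow> 'k) \<Rightarrow> ('k, 'n::finite) lmat \<Rightarrow> bool" where
  "unimodular_laurent s V \<longleftrightarrow> lfin V \<and>
     (\<exists>W. lfin W \<and> lmult s V W = lone \<and> lmult s W V = lone)"

definition head_regular :: "('k::field, 'n::finite) lmat \<Rightarrow> nat \<Rightarrow> bool" where
  "head_regular A l \<longleftrightarrow> (\<forall>k. k < 0 \<or> k > int l \<longrightarrow> A k = 0) \<and> det (A (int l)) \<noteq> 0"

definition fully_regular :: "('k::field \<Rightarrow> 'k) \<Rightarrow> ('k, 'n::finite) lmat \<Rightarrow> nat \<Rightarrow> bool" where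
  "fully_regular s A l \<longleftrightarrow> head_regular A l \<and>
     (\<exists>V. unimodular_laurent s V \<and> ore_mat (lmult s V A) \<and> det (lmult s V A 0) \<noteq> 0)"

end

theory Submission
  imports Defs
begin

text \<open>Multiplying A on the left by
  unimodular matrices, we decrease the total width of the rows of V A, the width of a row being
  the distance between the lowest and highest power of sigma occurring in it. First each row is
  shifted by a power of sigma so that it starts in degree 0. If the trailing coefficient C_0 is
  then singular, take u with u C_0 = 0 and, among the rows used by u, one row r of maximal degree;
  replacing row r by u C, which lives in degrees 1 .. deg r, is a unimodular operation that
  shrinks the width of row r. No row of V A ever vanishes, since V is invertible and A has an
  invertible leading coefficient, so the widths are well defined and the process terminates with
  a regular trailing coefficient.\<close>

section \<open>Field automorphisms\<close>

lemma field_aut_add: "field_aut f \<Longrightarrow> f (x + y) = f x + f y"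
  and field_aut_mult: "field_aut f \<Longrightarrow> f (x * y) = f x * f y"
  and field_aut_1: "field_aut f \<Longrightarrow> f 1 = 1"
  by (simp_all add: field_aut_def)

lemma field_aut_0: "field_aut f \<Longrightarrow> f 0 = 0"
  using field_aut_add[of f 0 0] by (metis add_0 add_cancel_left_right)

lemma field_aut_eq_0_iff: "field_aut f \<Longrightarrow> f x = 0 \<longleftrightarrow> x = 0"
  using field_aut_0[of f] by (metis bij_pointE field_aut_def)

lemma field_aut_minus:
  assumes "field_aut f" shows "f (- x) = - f x"
proof -
  have "f x + f (- x) = 0"
    using field_aut_add[OF assms, of x "- x"] field_aut_0[OF assms] by simp
  then show ?thesis by (simp add: eq_neg_iff_add_eq_0 add.commute)
qed

lemma field_aut_sum: "field_aut f \<Longrightarrow> f (sum g S) = (\<Sum>x\<in>S. f (g x))"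
  by (induction S rule: infinite_finite_induct) (simp_all add: field_aut_0 field_aut_add)

lemma field_aut_prod: "field_aut f \<Longrightarrow> f (prod g S) = (\<Prod>x\<in>S. f (g x))"
  by (induction S rule: infinite_finite_induct) (simp_all add: field_aut_1 field_aut_mult)

lemma field_aut_of_int:
  assumes "field_aut f" shows "f (of_int k) = of_int k"
proof -
  have nat: "f (of_nat n) = of_nat n" for n
    by (induction n) (simp_all add: field_aut_0 field_aut_1 field_aut_add assms)
  show ?thesis
  proof (cases k rule: int_cases2)
    case (nonneg n) then show ?thesis using nat by simp
  next
    case (nonpos n) then show ?thesis using nat field_aut_minus[OF assms] by simp
  qed
qed

lemma field_aut_id: "field_aut id"
  by (simp add: field_aut_def)

lemma field_aut_comp: "field_aut f \<Longrightarrow> field_aut g \<Longrightarrow> field_aut (f \<circ> g)"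
  by (simp add: field_aut_def bij_comp)

lemma field_aut_inv:
  assumes "field_aut f" shows "field_aut (inv f)"
proof -
  have b: "bij f" using assms by (simp add: field_aut_def)
  have [simp]: "inv f (f x) = x" "f (inv f x) = x" for x
    using b by (simp_all add: bij_is_inj bij_is_surj surj_f_inv_f)
  have inv_hom: "inv f (x + y) = inv f x + inv f y" "inv f (x * y) = inv f x * inv f y" for x y
  proof -
    have "inv f (x + y) = inv f (f (inv f x + inv f y))" "inv f (x * y) = inv f (f (inv f x * inv f y))"
      by (simp_all add: field_aut_add field_aut_mult assms)
    then show "inv f (x + y) = inv f x + inv f y" "inv f (x * y) = inv f x * inv f y" by simp_all
  qed
  have "inv f 1 = inv f (f 1)" by (simp add: field_aut_1 assms)
  then show ?thesis by (simp add: field_aut_def bij_imp_bij_inv b inv_hom)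
qed

lemma field_aut_funpow: "field_aut f \<Longrightarrow> field_aut (f ^^ n)"
  by (induction n) (simp_all add: field_aut_id field_aut_comp)

lemma field_aut_zpow: "field_aut s \<Longrightarrow> field_aut (zpow s k)"
  by (simp add: zpow_def field_aut_funpow field_aut_inv)

lemma zpow_0 [simp]: "zpow s 0 = id"
  by (simp add: zpow_def)

lemma zpow_Suc:
  assumes "field_aut s" shows "zpow s (k + 1) = s \<circ> zpow s k"
proof -
  have "bij s" using assms by (simp add: field_aut_def)
  then have s_inv: "s \<circ> inv s = id" by (meson bij_is_surj surj_iff)
  consider "k \<ge> 0" | "k = -1" | "k < -1" by linarith
  then show ?thesis
  proof cases
    case 1
    then have "nat (k + 1) = Suc (nat k)" by simp
    then show ?thesis using 1 by (simp add: zpow_def)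
  next
    case 2 then show ?thesis by (simp add: zpow_def s_inv)
  next
    case 3
    then have "nat (- k) = Suc (nat (- (k + 1)))" by simp
    then have "zpow s k = inv s \<circ> zpow s (k + 1)" using 3 by (simp add: zpow_def)
    then show ?thesis by (simp add: s_inv flip: comp_assoc)
  qed
qed

lemma zpow_pred:
  assumes "field_aut s" shows "zpow s (k - 1) = inv s \<circ> zpow s k"
proof -
  have "bij s" using assms by (simp add: field_aut_def)
  then have inv_s: "inv s \<circ> s = id" by (meson bij_is_inj inj_iff)
  have "zpow s k = s \<circ> zpow s (k - 1)" using zpow_Suc[OF assms, of "k - 1"] by simp
  then show ?thesis by (simp add: inv_s flip: comp_assoc)
qed

lemma zpow_add:
  assumes "field_aut s" shows "zpow s (i + j) = zpow s i \<circ> zpow s j"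
proof (induction i rule: int_induct[where k = 0])
  case base then show ?case by simp
next
  case (step1 i)
  have "zpow s (i + 1 + j) = s \<circ> zpow s (i + j)"
    using zpow_Suc[OF assms, of "i + j"] by (simp add: ac_simps)
  then show ?case using step1 by (simp add: zpow_Suc[OF assms] comp_assoc)
next
  case (step2 i)
  have "zpow s (i - 1 + j) = inv s \<circ> zpow s (i + j)"
    using zpow_pred[OF assms, of "i + j"] by (simp add: algebra_simps)
  then show ?case using step2 by (simp add: zpow_pred[OF assms] comp_assoc)
qed

section \<open>Matrices over a field\<close>

lemma map_matrix_nth [simp]: "map_matrix f M $ i $ j = f (M $ i $ j)"
  by (simp add: map_matrix_def)

lemma map_matrix_id [simp]: "map_matrix id M = M"
  by (simp add: vec_eq_iff)

lemma map_matrix_map_matrix: "map_matrix f (map_matrix g M) = map_matrix (f \<circ> g) M"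
  by (simp add: vec_eq_iff)

lemma map_matrix_0 [simp]: "field_aut f \<Longrightarrow> map_matrix f 0 = 0"
  by (simp add: vec_eq_iff field_aut_0)

lemma map_matrix_add: "field_aut f \<Longrightarrow> map_matrix f (M + N) = map_matrix f M + map_matrix f N"
  by (simp add: vec_eq_iff field_aut_add)

lemma map_matrix_sum: "field_aut f \<Longrightarrow> map_matrix f (sum g S) = (\<Sum>x\<in>S. map_matrix f (g x))"
  by (induction S rule: infinite_finite_induct) (simp_all add: map_matrix_add)

lemma map_matrix_mult: "field_aut f \<Longrightarrow> map_matrix f (M ** N) = map_matrix f M ** map_matrix f N"
  by (simp add: vec_eq_iff matrix_matrix_mult_def field_aut_sum field_aut_mult)

lemma det_map_matrix: "field_aut f \<Longrightarrow> det (map_matrix f M) = f (det M)"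
  by (simp add: det_def field_aut_sum field_aut_mult field_aut_prod field_aut_of_int)

lemma matrix_mult_sum_left: "sum f S ** (B::'a::semiring_1^'p^'n) = (\<Sum>i\<in>S. (f i :: 'a^'n^'m) ** B)"
  by (induction S rule: infinite_finite_induct)
    (simp_all add: vec_eq_iff matrix_matrix_mult_def sum.distrib algebra_simps)

lemma matrix_mult_sum_right: "(A::'a::semiring_1^'n^'m) ** sum f S = (\<Sum>i\<in>S. A ** (f i :: 'a^'p^'n))"
  by (induction S rule: infinite_finite_induct) (simp_all add: matrix_add_ldistrib)

lemma matrix_matrix_mult_row: "(A ** B) $ i = A $ i v* B"
  by (simp add: vec_eq_iff matrix_matrix_mult_def vector_matrix_mult_def)

lemma unit_vector_matrix_mult: "(\<chi> j. if i = j then 1 else 0) v* (M::'a::semiring_1^'n^'m) = M $ i"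
  by (simp add: vec_eq_iff vector_matrix_mult_def if_distrib[of "\<lambda>x. x * _"] cong: if_cong)

lemma det_eq_0_iff_left_kernel:
  "det (M::'a::field^'n^'n) = 0 \<longleftrightarrow> (\<exists>x. x \<noteq> 0 \<and> x v* M = 0)"
proof -
  have "det M \<noteq> 0 \<longleftrightarrow> (\<forall>x. transpose M *v x = 0 \<longrightarrow> x = 0)"
    by (metis det_transpose invertible_det_nz invertible_left_inverse matrix_left_invertible_ker)
  then show ?thesis by auto
qed

lemma vector_matrix_mult_nonzero_row:
  assumes "x v* M \<noteq> 0" obtains j where "x $ j \<noteq> 0" "M $ j \<noteq> 0"
proof -
  have "x v* M = (\<Sum>j\<in>UNIV. x $ j *s M $ j)"
    by (simp add: vec_eq_iff vector_matrix_mult_def sum_component)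
  then show ?thesis using assms that by (metis (no_types, lifting) sum.neutral vector_smult_lzero vector_smult_rzero)
qed

lemma invertible_replace_row:
  fixes u :: "'a::field^'n"
  assumes "u $ r \<noteq> 0"
  shows "invertible (\<chi> i j. if i = r then u $ j else if i = j then 1 else 0)" (is "invertible ?E")
proof -
  have "x = 0" if x: "?E *v x = 0" for x
  proof -
    have others: "x $ i = 0" if "i \<noteq> r" for i
    proof -
      have "(?E *v x) $ i = x $ i"
        using that by (simp add: matrix_vector_mult_def if_distrib[of "\<lambda>y. y * _"] cong: if_cong)
      then show ?thesis using x by simp
    qed
    have "0 = (?E *v x) $ r" using x by simp
    also have "\<dots> = (\<Sum>j\<in>UNIV. u $ j * x $ j)"
      by (simp add: matrix_vector_mult_def)
    also have "\<dots> = (\<Sum>j\<in>UNIV. if j = r then u $ r * x $ r else 0)"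
      by (rule sum.cong) (auto simp: others)
    finally have "x $ r = 0" using assms by simp
    with others show "x = 0" by (metis vec_eq_iff zero_index)
  qed
  then show ?thesis by (simp add: invertible_left_inverse matrix_left_invertible_ker)
qed

section \<open>Laurent matrices\<close>

definition lsupp :: "('k::zero, 'n::finite) lmat \<Rightarrow> int set" where
  "lsupp M = {k. M k \<noteq> 0}"

lemma lfin_iff_finite_lsupp: "lfin M \<longleftrightarrow> finite (lsupp M)"
  by (simp add: lfin_def lsupp_def)

lemma lmult_eq_sum:
  assumes "finite S" "lsupp V \<subseteq> S"
  shows "lmult s V W k = (\<Sum>i\<in>S. V i ** map_matrix (zpow s i) (W (k - i)))"
  unfolding lmult_def
  by (rule sum.mono_neutral_left) (use assms in \<open>auto simp: lsupp_def\<close>)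

lemma lsupp_lmult:
  assumes "lfin V" "field_aut s"
  shows "lsupp (lmult s V W) \<subseteq> (\<lambda>(i, j). i + j) ` (lsupp V \<times> lsupp W)"
proof
  fix k assume k: "k \<in> lsupp (lmult s V W)"
  have "lmult s V W k = (\<Sum>i\<in>lsupp V. V i ** map_matrix (zpow s i) (W (k - i)))"
    using assms by (intro lmult_eq_sum) (auto simp: lfin_iff_finite_lsupp)
  moreover have "lmult s V W k \<noteq> 0" using k by (simp add: lsupp_def)
  ultimately obtain i where "i \<in> lsupp V" "W (k - i) \<noteq> 0"
    using field_aut_zpow[OF assms(2)] by (force intro: sum.neutral)
  then show "k \<in> (\<lambda>(i, j). i + j) ` (lsupp V \<times> lsupp W)"
    by (auto simp: lsupp_def intro!: image_eqI[where x = "(i, k - i)"])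
qed

lemma lfin_lmult:
  assumes "lfin V" "lfin W" "field_aut s"
  shows "lfin (lmult s V W)"
  using finite_subset[OF lsupp_lmult[OF assms(1,3), of W]] assms(1,2)
  by (simp add: lfin_iff_finite_lsupp)

lemma lmult_assoc:
  assumes V: "lfin V" and W: "lfin W" and s: "field_aut s"
  shows "lmult s (lmult s V W) X = lmult s V (lmult s W X)"
proof
  fix k
  let ?S = "lsupp V" and ?T = "lsupp W"
  let ?P = "(\<lambda>(i, j). i + j) ` (?S \<times> ?T)"
  have fin: "finite ?S" "finite ?T" "finite ?P" using V W by (auto simp: lfin_iff_finite_lsupp)
  have aut: "field_aut (zpow s i)" for i using s by (rule field_aut_zpow)
  let ?t = "\<lambda>i a. (V i ** map_matrix (zpow s i) (W (a - i))) ** map_matrix (zpow s a) (X (k - a))"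
  let ?u = "\<lambda>i j. V i ** map_matrix (zpow s i) (W j ** map_matrix (zpow s j) (X (k - i - j)))"
  have "lmult s (lmult s V W) X k = (\<Sum>a\<in>?P. \<Sum>i\<in>?S. ?t i a)"
    by (simp add: lmult_eq_sum[OF fin(3) lsupp_lmult[OF V s]] lmult_eq_sum[OF fin(1)]
        matrix_mult_sum_left)
  also have "\<dots> = (\<Sum>i\<in>?S. \<Sum>a\<in>?P. ?t i a)"
    by (rule sum.swap)
  also have "\<dots> = (\<Sum>i\<in>?S. \<Sum>j\<in>?T. ?u i j)"
  proof (rule sum.cong[OF refl])
    fix i assume i: "i \<in> ?S"
    have "(\<Sum>a\<in>?P. ?t i a) = (\<Sum>a\<in>(+) i ` ?T. ?t i a)"
    proof (rule sum.mono_neutral_right[OF fin(3)])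
      show "(+) i ` ?T \<subseteq> ?P" using i by auto
      show "\<forall>a\<in>?P - (+) i ` ?T. ?t i a = 0"
      proof
        fix a assume "a \<in> ?P - (+) i ` ?T"
        then have "W (a - i) = 0" by (force simp: lsupp_def)
        then show "?t i a = 0" using aut by simp
      qed
    qed
    also have "\<dots> = (\<Sum>j\<in>?T. ?t i (i + j))"
      by (simp add: sum.reindex)
    also have "\<dots> = (\<Sum>j\<in>?T. ?u i j)"
      using aut by (simp add: map_matrix_mult map_matrix_map_matrix matrix_mul_assoc diff_diff_eq
          flip: zpow_add[OF s])
    finally show "(\<Sum>a\<in>?P. ?t i a) = (\<Sum>j\<in>?T. ?u i j)" .
  qed
  also have "\<dots> = lmult s V (lmult s W X) k"
    using aut by (simp add: lmult_eq_sum[OF fin(1)] lmult_eq_sum[OF fin(2)] map_matrix_sum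
        matrix_mult_sum_right algebra_simps)
  finally show "lmult s (lmult s V W) X k = lmult s V (lmult s W X) k" .
qed

lemma lsupp_lone: "lsupp lone = {0}"
  by (auto simp: lsupp_def lone_def vec_eq_iff mat_def)

lemma lfin_lone: "lfin lone"
  by (simp add: lfin_iff_finite_lsupp lsupp_lone)

lemma lmult_lone_left [simp]: "lmult s lone X = X"
proof
  fix k
  have "lmult s lone X k = (\<Sum>i\<in>{0}. lone i ** map_matrix (zpow s i) (X (k - i)))"
    by (rule lmult_eq_sum) (auto simp: lsupp_lone)
  then show "lmult s lone X k = X k" by (simp add: lone_def)
qed

lemma unimodular_lone: "unimodular_laurent s lone"
  unfolding unimodular_laurent_def by (auto intro: lfin_lone)

lemma unimodular_lmult:
  assumes s: "field_aut s" and U: "unimodular_laurent s U" and V: "unimodular_laurent s V"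
  shows "unimodular_laurent s (lmult s U V)"
proof -
  obtain U' where U': "lfin U" "lfin U'" "lmult s U U' = lone" "lmult s U' U = lone"
    using U by (auto simp: unimodular_laurent_def)
  obtain V' where V': "lfin V" "lfin V'" "lmult s V V' = lone" "lmult s V' V = lone"
    using V by (auto simp: unimodular_laurent_def)
  have "lmult s (lmult s U V) (lmult s V' U') = lone"
    using lmult_assoc[OF U'(1) V'(1) s, of "lmult s V' U'"] lmult_assoc[OF V'(1,2) s, of U', symmetric]
      U'(3) V'(3) by simp
  moreover have "lmult s (lmult s V' U') (lmult s U V) = lone"
    using lmult_assoc[OF V'(2) U'(2) s, of "lmult s U V"] lmult_assoc[OF U'(2,1) s, of V, symmetric]
      U'(4) V'(4) by simp
  ultimately show ?thesis
    unfolding unimodular_laurent_def using U' V' s by (auto intro!: exI[of _ "lmult s V' U'"] lfin_lmult)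
qed

lemma ore_mat_degree_bound:
  assumes "ore_mat C" obtains d :: nat where "\<forall>k. k < 0 \<or> k > int d \<longrightarrow> C k = 0"
proof -
  have fin: "finite (lsupp C)" using assms by (simp add: ore_mat_def lfin_iff_finite_lsupp)
  have "C k = 0" if "k < 0 \<or> k > int (nat (Max (insert 0 (lsupp C))))" for k
  proof (rule ccontr)
    assume "C k \<noteq> 0"
    then have "k \<le> Max (insert 0 (lsupp C))" using fin by (simp add: lsupp_def)
    moreover have "k \<ge> 0" using assms \<open>C k \<noteq> 0\<close> by (auto simp: ore_mat_def not_less[symmetric])
    ultimately show False using that by linarith
  qed
  then show ?thesis using that by blast
qed

lemma lmult_row_eq_sum:
  assumes "finite S" "lsupp V \<subseteq> S"
  shows "lmult s V W k $ r = (\<Sum>i\<in>S. V i $ r v* map_matrix (zpow s i) (W (k - i)))"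
  by (simp add: lmult_eq_sum[OF assms] sum_component vec_eq_iff matrix_matrix_mult_def vector_matrix_mult_def)

lemma unimodular_row_nonzero:
  assumes "unimodular_laurent s V" obtains i where "V i $ r \<noteq> 0"
proof -
  obtain W where V: "lfin V" and W: "lmult s V W = lone"
    using assms by (auto simp: unimodular_laurent_def)
  have "lmult s V W 0 $ r = (\<Sum>i\<in>lsupp V. V i $ r v* map_matrix (zpow s i) (W (0 - i)))"
    using V by (intro lmult_row_eq_sum) (auto simp: lfin_iff_finite_lsupp)
  moreover have "lmult s V W 0 $ r \<noteq> 0"
    using W by (auto simp: lone_def mat_def vec_eq_iff)
  ultimately show ?thesis using that by (force intro: sum.neutral)
qed

definition ldiag_shift :: "('n::finite \<Rightarrow> int) \<Rightarrow> ('k::field, 'n) lmat" where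
  "ldiag_shift e k = (\<chi> i j. if i = j \<and> k = e i then 1 else 0)"

lemma lsupp_ldiag_shift: "lsupp (ldiag_shift e) \<subseteq> range e"
  by (auto simp: lsupp_def ldiag_shift_def vec_eq_iff split: if_splits)

lemma lfin_ldiag_shift: "lfin (ldiag_shift e)"
  using finite_subset[OF lsupp_ldiag_shift] by (simp add: lfin_iff_finite_lsupp)

lemma lmult_ldiag_shift_row:
  "lmult s (ldiag_shift e) X k $ r = (\<chi> j. zpow s (e r) (X (k - e r) $ r $ j))"
proof -
  have "lmult s (ldiag_shift e) X k $ r
      = (\<Sum>i\<in>range e. ldiag_shift e i $ r v* map_matrix (zpow s i) (X (k - i)))"
    by (rule lmult_row_eq_sum[OF _ lsupp_ldiag_shift]) simp
  also have "\<dots> = (\<Sum>i\<in>range e. if i = e r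
      then (\<chi> j. if r = j then 1 else 0) v* map_matrix (zpow s i) (X (k - i)) else 0)"
    by (rule sum.cong) (auto simp: ldiag_shift_def vec_eq_iff vector_matrix_mult_def)
  also have "\<dots> = (\<chi> j. zpow s (e r) (X (k - e r) $ r $ j))"
    by (simp add: unit_vector_matrix_mult vec_eq_iff)
  finally show ?thesis .
qed

lemma unimodular_ldiag_shift:
  assumes "field_aut s"
  shows "unimodular_laurent s (ldiag_shift e)"
proof -
  have inverse: "lmult s (ldiag_shift e) (ldiag_shift (\<lambda>i. - e i)) = lone" for e
    using field_aut_zpow[OF assms]
    by (auto simp: fun_eq_iff vec_eq_iff lmult_ldiag_shift_row ldiag_shift_def lone_def mat_def
        field_aut_0 field_aut_1)
  show ?thesis
    unfolding unimodular_laurent_def using inverse[of e] inverse[of "\<lambda>i. - e i"]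
    by (auto intro!: exI[of _ "ldiag_shift (\<lambda>i. - e i)"] lfin_ldiag_shift)
qed

definition lconst :: "'k::field^'n^'n \<Rightarrow> ('k, 'n::finite) lmat" where
  "lconst E k = (if k = 0 then E else 0)"

lemma lfin_lconst: "lfin (lconst E)"
  unfolding lfin_def by (rule finite_subset[of _ "{0}"]) (auto simp: lconst_def)

lemma lmult_lconst: "lmult s (lconst E) X k = E ** X k"
proof -
  have "lmult s (lconst E) X k = (\<Sum>i\<in>{0}. lconst E i ** map_matrix (zpow s i) (X (k - i)))"
    by (rule lmult_eq_sum) (auto simp: lsupp_def lconst_def)
  then show ?thesis by (simp add: lconst_def)
qed

lemma unimodular_lconst:
  assumes "invertible E"
  shows "unimodular_laurent s (lconst E)"
proof -
  obtain F where "E ** F = mat 1" "F ** E = mat 1" using assms by (auto simp: invertible_def)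
  then have "lmult s (lconst E) (lconst F) = lone" "lmult s (lconst F) (lconst E) = lone"
    by (auto simp: lmult_lconst lconst_def lone_def)
  then show ?thesis unfolding unimodular_laurent_def by (auto intro: lfin_lconst)
qed

definition row_supp :: "('k::zero, 'n::finite) lmat \<Rightarrow> 'n \<Rightarrow> int set" where
  "row_supp C r = {k. C k $ r \<noteq> 0}"

lemma finite_row_supp: "lfin C \<Longrightarrow> finite (row_supp C r)"
  unfolding lfin_def row_supp_def by (rule finite_subset[rotated]) auto

lemma row_supp_ldiag_shift:
  assumes "field_aut s"
  shows "row_supp (lmult s (ldiag_shift e) X) r = (\<lambda>k. k + e r) ` row_supp X r"
proof -
  have shifted: "k \<in> row_supp (lmult s (ldiag_shift e) X) r \<longleftrightarrow> k - e r \<in> row_supp X r" for k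
    using field_aut_eq_0_iff[OF field_aut_zpow[OF assms]]
    by (simp add: row_supp_def lmult_ldiag_shift_row vec_eq_iff)
  show ?thesis
  proof (intro set_eqI iffI)
    fix k assume "k \<in> row_supp (lmult s (ldiag_shift e) X) r"
    then show "k \<in> (\<lambda>k. k + e r) ` row_supp X r"
      using shifted by (intro rev_image_eqI[of "k - e r"]) simp_all
  next
    fix k assume "k \<in> (\<lambda>k. k + e r) ` row_supp X r"
    then show "k \<in> row_supp (lmult s (ldiag_shift e) X) r"
      using shifted by fastforce
  qed
qed

text \<open>The last nonzero coefficient V_h of row r meets the invertible leading coefficient A_l
  in degree h + l, and nothing else contributes there.\<close>
lemma lmult_row_leading_coeff:
  assumes s: "field_aut s" and V: "lfin V"
    and above: "\<forall>k > int l. A k = 0" and lead: "det (A (int l)) \<noteq> 0"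
    and h: "V h $ r \<noteq> 0" "\<forall>i > h. V i $ r = 0"
  shows "lmult s V A (h + int l) $ r \<noteq> 0"
proof -
  let ?term = "\<lambda>i. V i $ r v* map_matrix (zpow s i) (A (h + int l - i))"
  have fin: "finite (insert h (lsupp V))" using V by (simp add: lfin_iff_finite_lsupp)
  have "lmult s V A (h + int l) $ r = (\<Sum>i\<in>insert h (lsupp V). ?term i)"
    by (rule lmult_row_eq_sum[OF fin]) auto
  also have "\<dots> = (\<Sum>i\<in>{h}. ?term i)"
  proof (rule sum.mono_neutral_right[OF fin], simp, rule ballI)
    fix i assume "i \<in> insert h (lsupp V) - {h}"
    then consider "i > h" | "i < h" by fastforce
    then show "?term i = 0"
      by cases (use h(2) above field_aut_zpow[OF s] in auto)
  qed
  finally have "lmult s V A (h + int l) $ r = V h $ r v* map_matrix (zpow s h) (A (int l))"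
    by simp
  moreover have "det (map_matrix (zpow s h) (A (int l))) \<noteq> 0"
    using lead by (simp add: det_map_matrix field_aut_zpow[OF s] field_aut_eq_0_iff)
  ultimately show ?thesis using h(1) det_eq_0_iff_left_kernel by metis
qed

lemma left_kernel_combination_degrees:
  assumes neg: "\<forall>k<0. C k = 0" and kernel: "u v* C 0 = 0"
    and bound: "\<forall>j. u $ j \<noteq> 0 \<longrightarrow> finite (row_supp C j) \<and> Max (row_supp C j) \<le> T"
  shows "{k. u v* C k \<noteq> 0} \<subseteq> {1..T}"
proof
  fix k assume "k \<in> {k. u v* C k \<noteq> 0}"
  then have nz: "u v* C k \<noteq> 0" by simp
  then obtain j where j: "u $ j \<noteq> 0" "C k $ j \<noteq> 0" by (rule vector_matrix_mult_nonzero_row)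
  have "k \<in> row_supp C j" using j(2) by (simp add: row_supp_def)
  then have "k \<le> T" using bound j(1) Max_ge by (meson order_trans)
  moreover have "k \<noteq> 0" "\<not> k < 0" using nz kernel neg by auto
  ultimately show "k \<in> {1..T}" by simp
qed

lemma Min_row_supp_eq_0:
  assumes "finite (row_supp C r)" "\<forall>k<0. C k = 0" "C 0 $ r \<noteq> 0"
  shows "Min (row_supp C r) = 0"
  using assms by (intro Min_eqI) (auto simp: row_supp_def not_less[symmetric])

definition row_width :: "('k::zero, 'n::finite) lmat \<Rightarrow> 'n \<Rightarrow> nat" where
  "row_width C r = nat (Max (row_supp C r) - Min (row_supp C r))"

definition total_row_width :: "('k::zero, 'n::finite) lmat \<Rightarrow> nat" where
  "total_row_width C = (\<Sum>r\<in>UNIV. row_width C r)"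

section \<open>Row reduction\<close>

locale head_regular_system =
  fixes s :: "'k::field \<Rightarrow> 'k" and A :: "('k, 'n::finite) lmat" and l :: nat
  assumes aut: "field_aut s"
    and vanish: "\<forall>k. k < 0 \<or> k > int l \<longrightarrow> A k = 0"
    and lead: "det (A (int l)) \<noteq> 0"
begin

lemma lfin_A: "lfin A"
  unfolding lfin_def by (rule finite_subset[of _ "{0..int l}"]) (use vanish in force)+

lemma finite_row_supp_lmult: "lfin V \<Longrightarrow> finite (row_supp (lmult s V A) r)"
  by (simp add: finite_row_supp lfin_lmult lfin_A aut)

lemma row_supp_lmult_nonempty:
  assumes "unimodular_laurent s V" shows "row_supp (lmult s V A) r \<noteq> {}"
proof -
  have V: "lfin V" using assms by (simp add: unimodular_laurent_def)
  let ?H = "{i. V i $ r \<noteq> 0}"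
  have "finite ?H" using V unfolding lfin_def by (rule finite_subset[rotated]) auto
  moreover have "?H \<noteq> {}" using unimodular_row_nonzero[OF assms] by blast
  ultimately have "V (Max ?H) $ r \<noteq> 0" "\<forall>i > Max ?H. V i $ r = 0"
    using Max_in[of ?H] Max_ge[of ?H] by (auto simp: not_less[symmetric])
  then have "lmult s V A (Max ?H + int l) $ r \<noteq> 0"
    using lmult_row_leading_coeff[OF aut V] vanish lead by blast
  then show ?thesis by (auto simp: row_supp_def)
qed

lemma normalize_rows:
  assumes V: "unimodular_laurent s V"
  obtains V' where "unimodular_laurent s V'"
    and "total_row_width (lmult s V' A) = total_row_width (lmult s V A)"
    and "\<forall>k<0. lmult s V' A k = 0" and "\<forall>r. lmult s V' A 0 $ r \<noteq> 0"
proof -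
  let ?C = "lmult s V A"
  define e where "e r = - Min (row_supp ?C r)" for r
  define V' where "V' = lmult s (ldiag_shift e) V"
  have fin: "finite (row_supp ?C r)" and ne: "row_supp ?C r \<noteq> {}" for r
    using V row_supp_lmult_nonempty finite_row_supp_lmult by (auto simp: unimodular_laurent_def)
  have "lmult s V' A = lmult s (ldiag_shift e) ?C"
    unfolding V'_def using V by (simp add: lmult_assoc lfin_ldiag_shift aut unimodular_laurent_def)
  then have supp: "row_supp (lmult s V' A) r = (\<lambda>k. k + e r) ` row_supp ?C r" for r
    by (simp add: row_supp_ldiag_shift aut)
  have Min: "Min (row_supp (lmult s V' A) r) = 0"
    and Max: "Max (row_supp (lmult s V' A) r) = Max (row_supp ?C r) + e r" for r
    using Min_add_commute[OF fin ne, of id] Max_add_commute[OF fin ne, of id]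
    by (simp_all add: supp) (simp add: e_def)
  have fin': "finite (row_supp (lmult s V' A) r)" for r
    using fin by (simp add: supp)
  show ?thesis
  proof
    show "unimodular_laurent s V'"
      unfolding V'_def by (rule unimodular_lmult[OF aut unimodular_ldiag_shift[OF aut] V])
    show "total_row_width (lmult s V' A) = total_row_width ?C"
      by (simp add: total_row_width_def row_width_def Min Max e_def)
    show "\<forall>k<0. lmult s V' A k = 0"
    proof (intro allI impI)
      fix k :: int assume "k < 0"
      then have "k \<notin> row_supp (lmult s V' A) r" for r
        using Min_le[OF fin', of k r] Min[of r] by auto
      then have "lmult s V' A k $ r = 0" for r by (simp add: row_supp_def)
      then show "lmult s V' A k = 0" by (simp add: vec_eq_iff)
    qed
    show "\<forall>r. lmult s V' A 0 $ r \<noteq> 0"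
    proof
      fix r
      have "row_supp (lmult s V' A) r \<noteq> {}" using ne[of r] by (simp add: supp)
      from Min_in[OF fin' this] have "0 \<in> row_supp (lmult s V' A) r" by (simp only: Min)
      then show "lmult s V' A 0 $ r \<noteq> 0" by (simp add: row_supp_def)
    qed
  qed
qed

lemma eliminate_singular_row:
  assumes V: "unimodular_laurent s V"
    and neg: "\<forall>k<0. lmult s V A k = 0" and rows0: "\<forall>r. lmult s V A 0 $ r \<noteq> 0"
    and singular: "det (lmult s V A 0) = 0"
  obtains V' where "unimodular_laurent s V'"
    and "total_row_width (lmult s V' A) < total_row_width (lmult s V A)"
proof -
  let ?C = "lmult s V A"
  have fin: "finite (row_supp ?C r)" for r
    using V finite_row_supp_lmult by (simp add: unimodular_laurent_def)
  obtain u where u: "u \<noteq> 0" "u v* ?C 0 = 0"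
    using singular det_eq_0_iff_left_kernel by blast
  define R where "R = {r. u $ r \<noteq> 0}"
  have "R \<noteq> {}" using u(1) by (auto simp: R_def vec_eq_iff)
  moreover have "finite R" by simp
  ultimately obtain r0 where r0: "r0 \<in> R"
    and r0_max: "Max (row_supp ?C r0) = Max ((\<lambda>r. Max (row_supp ?C r)) ` R)"
    using Max_in[of "(\<lambda>r. Max (row_supp ?C r)) ` R"] by fastforce
  define E where "E = (\<chi> i j. if i = r0 then u $ j else if i = j then 1 else (0::'k))"
  define V' where "V' = lmult s (lconst E) V"
  have unimodular: "unimodular_laurent s V'"
    unfolding V'_def using r0 invertible_replace_row[of u r0]
    by (auto intro!: unimodular_lmult aut unimodular_lconst V simp: E_def R_def)
  have V'A: "lmult s V' A k = E ** ?C k" for k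
    unfolding V'_def using V
    by (simp add: lmult_assoc lfin_lconst aut lmult_lconst unimodular_laurent_def)
  have rows: "lmult s V' A k $ r = (if r = r0 then u v* ?C k else ?C k $ r)" for k r
  proof (cases "r = r0")
    case False
    then have "E $ r = (\<chi> j. if r = j then 1 else 0)" by (simp add: E_def vec_eq_iff)
    then show ?thesis using False by (simp add: V'A matrix_matrix_mult_row unit_vector_matrix_mult)
  qed (simp add: V'A E_def matrix_matrix_mult_row)
  let ?C' = "lmult s V' A"
  let ?T = "Max (row_supp ?C r0)"
  have same: "row_width ?C' r = row_width ?C r" if "r \<noteq> r0" for r
    using that by (simp add: row_width_def row_supp_def rows)
  have "{k. u v* ?C k \<noteq> 0} \<subseteq> {1..?T}"
    using fin r0_max \<open>finite R\<close>
    by (intro left_kernel_combination_degrees[OF neg u(2)]) (simp add: R_def)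
  then have sub: "row_supp ?C' r0 \<subseteq> {1..?T}" by (simp add: row_supp_def rows)
  then have fin': "finite (row_supp ?C' r0)" by (rule finite_subset) simp
  have ne: "row_supp ?C' r0 \<noteq> {}" by (rule row_supp_lmult_nonempty[OF unimodular])
  have "1 \<le> Min (row_supp ?C' r0)" "Max (row_supp ?C' r0) \<le> ?T"
    using sub Min_in[OF fin' ne] Max_in[OF fin' ne] by auto
  moreover have "Min (row_supp ?C' r0) \<le> Max (row_supp ?C' r0)"
    using Min_le[OF fin' Max_in[OF fin' ne]] .
  moreover have "Min (row_supp ?C r0) = 0"
    using fin neg rows0 by (intro Min_row_supp_eq_0) auto
  ultimately have narrower: "row_width ?C' r0 < row_width ?C r0"
    unfolding row_width_def by linarith
  moreover have "row_width ?C' r \<le> row_width ?C r" for r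
    using narrower same by (cases "r = r0") auto
  ultimately have "total_row_width ?C' < total_row_width ?C"
    unfolding total_row_width_def by (intro sum_strict_mono_ex1) auto
  with unimodular show ?thesis by (rule that)
qed

lemma exists_regular_trailing_coeff:
  fixes V :: "('k, 'n) lmat"
  assumes "unimodular_laurent s V"
  shows "\<exists>V'. unimodular_laurent s V' \<and> ore_mat (lmult s V' A) \<and> det (lmult s V' A 0) \<noteq> 0"
  using assms
proof (induction "total_row_width (lmult s V A)" arbitrary: V rule: less_induct)
  case less
  obtain V1 where V1: "unimodular_laurent s V1"
    and width: "total_row_width (lmult s V1 A) = total_row_width (lmult s V A)"
    and neg: "\<forall>k<0. lmult s V1 A k = 0" and rows0: "\<forall>r. lmult s V1 A 0 $ r \<noteq> 0"
    using normalize_rows[OF less.prems] by blast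
  show ?case
  proof (cases "det (lmult s V1 A 0) = 0")
    case True
    then obtain V2 where "unimodular_laurent s V2"
      and "total_row_width (lmult s V2 A) < total_row_width (lmult s V A)"
      using eliminate_singular_row[OF V1 neg rows0] width by metis
    then show ?thesis using less.hyps by blast
  next
    case False
    have "lfin (lmult s V1 A)"
      using V1 by (simp add: lfin_lmult lfin_A aut unimodular_laurent_def)
    then show ?thesis using V1 neg False by (auto simp: ore_mat_def)
  qed
qed

end

theorem mainTheorem6:
  fixes sF :: "'a::field_char_0 \<Rightarrow> 'a"
    and s :: "'a ratfun \<Rightarrow> 'a ratfun"
    and A :: "('a ratfun, 'n::finite) lmat"
    and l :: nat
  assumes "PiSigma_ext sF s"
    and "\<forall>k. k < 0 \<or> k > int l \<longrightarrow> A k = 0"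
    and "det (A (int l)) \<noteq> 0"
  shows "(\<exists>l' :: nat. \<exists>V. unimodular_laurent s V \<and>
            (\<forall>k. k < 0 \<or> k > int l' \<longrightarrow> lmult s V A k = 0) \<and>
            det (lmult s V A 0) \<noteq> 0)
         \<and> fully_regular s A l"
proof -
  interpret head_regular_system s A l
    using assms by unfold_locales (simp_all add: PiSigma_ext_def)
  obtain V where V: "unimodular_laurent s V" "ore_mat (lmult s V A)" "det (lmult s V A 0) \<noteq> 0"
    using exists_regular_trailing_coeff[OF unimodular_lone] by blast
  obtain l' :: nat where "\<forall>k. k < 0 \<or> k > int l' \<longrightarrow> lmult s V A k = 0"
    using ore_mat_degree_bound[OF V(2)] .
  then show ?thesis
    using V assms(2,3) unfolding fully_regular_def head_regular_def by blast
qed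

end
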